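(* Let $I^h\subset\mathbb{K}[S_M^h]$ be a homogeneous ideal and let $J^h\subset\mathbb{K}[\mathbf{y}]$ be the ideal generated by $\varphi(I^h)\cup T$. If $G$ is a Gröbner basis of $J^h$ with respect to the monomial order $<_y$, then $\psi(G)$ is a sparse Gröbner basis of $I^h$ with respect to the graded sparse order $\prec_h$.
   Context: Let $\mathbb{K}$ be a field of characteristic $0$, $M\subset\mathbb{R}^n$ a polytope with $0\in M$, $S_M\subset\mathbb{Z}^n$ the affine semigroup generated by $M\cap\mathbb{Z}^n$ and $S_M^h\subset\mathbb{Z}^{n+1}$ the one generated by $\{(s,1):s\in M\cap\mathbb{Z}^n\}$, both assumed pointed. $\mathbb{K}[S]$ is the semigroup algebra with monomials $X^s$, $X^sX^t=X^{s+t}$; $\mathbb{K}[S_M^h]$ is graded by $\deg X^{(s,d)}=d$, and "homogeneous" refers to this grading. $\chi:\mathbb{K}[S_M^h]\to\mathbb{K}[S_M]$, $X^{(s,d)}\mapsto X^s$. The affine degree $\delta^A(X^s)$ is the least $d$ with $(s,d)\in S_M^h$, extended to polynomials by taking the maximum over the support; the sparse degree of $f\in\mathbb{K}[S_M^h]$ is $\delta(f)=\delta^A(\chi(f))$. Fix a monomial order $<_M$ on $\mathbb{K}[S_M]$; the sparse order: $X^s\prec X^r$ iff $\delta^A(X^s)<\delta^A(X^r)$, or equality and $X^s<_MX^r$; the graded sparse order on monomials of $\mathbb{K}[S_M^h]$: $X^{(s,d)}\prec_hX^{(r,d')}$ iff $d<d'$, or $d=d'$ and $X^s\prec X^r$.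 Divisibility: $X^{(s,d_s)}\mid_\delta X^{(r,d_r)}$ if some monomial $X^{(t,d_t)}$ satisfies $X^{(s,d_s)}X^{(t,d_t)}=X^{(r,d_r)}$ and $\delta(X^{(s,d_s)})+\delta(X^{(t,d_t)})=\delta(X^{(r,d_r)})$. A sparse Gröbner basis of an ideal $I^h\subset\mathbb{K}[S_M^h]$ w.r.t. $\prec_h$ is a subset of $I^h$ generating $I^h$ such that for every nonzero $f\in I^h$ some element $g$ of it satisfies $\mathrm{LM}_{\prec_h}(g)\mid_\delta\mathrm{LM}_{\prec_h}(f)$. Let $a_0,\dots,a_m$ be the elements of $\{(s,1):s\in M\cap\mathbb{Z}^n\}$ with $a_0=(0,1)$. Let $\mathbb{K}[\mathbf{y}]=\mathbb{K}[y_0,\dots,y_m]$ with standard grading and $\psi:\mathbb{K}[\mathbf{y}]\to\mathbb{K}[S_M^h]$ the degree-preserving $\mathbb{K}$-algebra epimorphism $y_i\mapsto X^{a_i}$; its kernel $T$ is the (homogeneous, prime) lattice ideal $\langle\mathbf{y}^u-\mathbf{y}^v:\psi(\mathbf{y}^u)=\psi(\mathbf{y}^v)\rangle$. Fix any monomial order $\tilde<$ on $\mathbb{K}[\mathbf{y}]$ and define the monomial order $<_y$: $\mathbf{y}^a<_y\mathbf{y}^b$ iff $\deg\mathbf{y}^a<\deg\mathbf{y}^b$; or the total degrees are equal and $\deg_{y_0}\mathbf{y}^a>\deg_{y_0}\mathbf{y}^b$; or both are equal and $\chi(\psi(\mathbf{y}^a))<_M\chi(\psi(\mathbf{y}^b))$;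 or all these are equal and $\mathbf{y}^a\,\tilde<\,\mathbf{y}^b$. For $g\in\mathbb{K}[\mathbf{y}]$, $\eta(g)$ is the normal form (remainder of division by a Gröbner basis) of $g$ with respect to $T$ and $<_y$. Define $\varphi:\mathbb{K}[S_M^h]\to\mathbb{K}[\mathbf{y}]$ by $\varphi(f)=\eta(g)$ for any $g$ with $\psi(g)=f$ (well defined). *)

theory Defs
  imports "HOL-Analysis.Analysis" "HOL-Library.Poly_Mapping" "HOL-Library.Product_Plus"
begin

(* Points of Z^n are int^'n; exponents of S_M^h in Z^(n+1) are pairs (s,d) :: (int^'n) \<times> int.
   Polynomial ring K[y]: variables are indexed by the lattice points of M (the variable y_0
   is the one indexed by the lattice point 0); monomials are (int^'n \<Rightarrow>\<^sub>0 nat). *)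

definition lattice_pts :: "(real^'n) set \<Rightarrow> (int^'n) set" where
  "lattice_pts M = {s. (\<chi> i. real_of_int (s$i)) \<in> M}"

inductive_set SM :: "(real^'n) set \<Rightarrow> (int^'n) set" for M where
  SM_zero: "0 \<in> SM M"
| SM_add: "s \<in> lattice_pts M \<Longrightarrow> t \<in> SM M \<Longrightarrow> s + t \<in> SM M"

inductive_set SMh :: "(real^'n) set \<Rightarrow> ((int^'n) \<times> int) set" for M where
  SMh_zero: "(0, 0) \<in> SMh M"
| SMh_add: "s \<in> lattice_pts M \<Longrightarrow> x \<in> SMh M \<Longrightarrow> (s, 1) + x \<in> SMh M"

definition pointed :: "'a::ab_group_add set \<Rightarrow> bool" where
  "pointed S \<longleftrightarrow> (\<forall>s\<in>S. - s \<in> S \<longrightarrow> s = 0)"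

definition KS :: "'a set \<Rightarrow> ('a \<Rightarrow>\<^sub>0 'k::zero) set" where
  "KS S = {f. Poly_Mapping.keys f \<subseteq> S}"

inductive_set ideal_gen :: "'a::semiring_0 set \<Rightarrow> 'a set \<Rightarrow> 'a set" for R B where
  ideal_gen_zero: "0 \<in> ideal_gen R B"
| ideal_gen_step: "r \<in> R \<Longrightarrow> b \<in> B \<Longrightarrow> x \<in> ideal_gen R B \<Longrightarrow> r * b + x \<in> ideal_gen R B"

definition homogeneous :: "(('a \<times> int) \<Rightarrow>\<^sub>0 'k::zero) \<Rightarrow> bool" where
  "homogeneous f \<longleftrightarrow> (\<exists>d. \<forall>k\<in>Poly_Mapping.keys f. snd k = d)"

definition homogeneous_ideal :: "(real^'n) set \<Rightarrow> (((int^'n) \<times> int) \<Rightarrow>\<^sub>0 'k::semiring_0) set \<Rightarrow> bool" where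
  "homogeneous_ideal M I \<longleftrightarrow>
     (\<exists>B \<subseteq> KS (SMh M). (\<forall>b\<in>B. homogeneous b) \<and> I = ideal_gen (KS (SMh M)) B)"

definition monomial_order :: "'a::comm_monoid_add set \<Rightarrow> ('a \<Rightarrow> 'a \<Rightarrow> bool) \<Rightarrow> bool" where
  "monomial_order E lt \<longleftrightarrow>
     (\<forall>a\<in>E. \<not> lt a a) \<and>
     (\<forall>a\<in>E. \<forall>b\<in>E. \<forall>c\<in>E. lt a b \<longrightarrow> lt b c \<longrightarrow> lt a c) \<and>
     (\<forall>a\<in>E. \<forall>b\<in>E. a \<noteq> b \<longrightarrow> lt a b \<or> lt b a) \<and>
     (\<forall>a\<in>E. \<forall>b\<in>E. \<forall>c\<in>E. lt a b \<longrightarrow> lt (a + c) (b + c)) \<and>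
     (\<forall>a\<in>E. \<not> lt a 0)"

definition Ey :: "(real^'n) set \<Rightarrow> (int^'n \<Rightarrow>\<^sub>0 nat) set" where
  "Ey M = {\<alpha>. Poly_Mapping.keys \<alpha> \<subseteq> lattice_pts M}"

definition Ky :: "(real^'n) set \<Rightarrow> ((int^'n \<Rightarrow>\<^sub>0 nat) \<Rightarrow>\<^sub>0 'k::zero) set" where
  "Ky M = {p. Poly_Mapping.keys p \<subseteq> Ey M}"

definition ydeg :: "(int^'n \<Rightarrow>\<^sub>0 nat) \<Rightarrow> nat" where
  "ydeg \<alpha> = (\<Sum>s\<in>Poly_Mapping.keys \<alpha>. Poly_Mapping.lookup \<alpha> s)"

(* psi(y^alpha) = X^(psiexp alpha) *)
definition psiexp :: "(int^'n \<Rightarrow>\<^sub>0 nat) \<Rightarrow> (int^'n) \<times> int" where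
  "psiexp \<alpha> = ((\<Sum>s\<in>Poly_Mapping.keys \<alpha>. of_nat (Poly_Mapping.lookup \<alpha> s) *s s), int (ydeg \<alpha>))"

definition psi :: "((int^'n \<Rightarrow>\<^sub>0 nat) \<Rightarrow>\<^sub>0 'k::comm_monoid_add) \<Rightarrow> (((int^'n) \<times> int) \<Rightarrow>\<^sub>0 'k)" where
  "psi p = (\<Sum>\<alpha>\<in>Poly_Mapping.keys p. Poly_Mapping.single (psiexp \<alpha>) (Poly_Mapping.lookup p \<alpha>))"

definition Tideal :: "(real^'n) set \<Rightarrow> ((int^'n \<Rightarrow>\<^sub>0 nat) \<Rightarrow>\<^sub>0 'k::comm_monoid_add) set" where
  "Tideal M = {p \<in> Ky M. psi p = 0}"

definition less_y :: "(int^'n \<Rightarrow> int^'n \<Rightarrow> bool) \<Rightarrow> ((int^'n \<Rightarrow>\<^sub>0 nat) \<Rightarrow> (int^'n \<Rightarrow>\<^sub>0 nat) \<Rightarrow> bool)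
    \<Rightarrow> (int^'n \<Rightarrow>\<^sub>0 nat) \<Rightarrow> (int^'n \<Rightarrow>\<^sub>0 nat) \<Rightarrow> bool" where
  "less_y lessM tilde a b \<longleftrightarrow>
     ydeg a < ydeg b \<or>
     (ydeg a = ydeg b \<and>
       (Poly_Mapping.lookup a 0 > Poly_Mapping.lookup b 0 \<or>
        (Poly_Mapping.lookup a 0 = Poly_Mapping.lookup b 0 \<and>
          (lessM (fst (psiexp a)) (fst (psiexp b)) \<or>
           (fst (psiexp a) = fst (psiexp b) \<and> tilde a b)))))"

definition lm :: "('a \<Rightarrow> 'a \<Rightarrow> bool) \<Rightarrow> ('a \<Rightarrow>\<^sub>0 'k::zero) \<Rightarrow> 'a" where
  "lm lt p = (THE \<alpha>. \<alpha> \<in> Poly_Mapping.keys p \<and> (\<forall>\<beta>\<in>Poly_Mapping.keys p. \<beta> \<noteq> \<alpha> \<longrightarrow> lt \<beta> \<alpha>))"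

(* normal form w.r.t. T and the order: the unique r with g - r in T and no monomial of r
   a leading monomial of an element of T (= remainder of division by a Groebner basis of T) *)
definition eta :: "(real^'n) set \<Rightarrow> ((int^'n \<Rightarrow>\<^sub>0 nat) \<Rightarrow> (int^'n \<Rightarrow>\<^sub>0 nat) \<Rightarrow> bool)
    \<Rightarrow> ((int^'n \<Rightarrow>\<^sub>0 nat) \<Rightarrow>\<^sub>0 'k::ab_group_add) \<Rightarrow> ((int^'n \<Rightarrow>\<^sub>0 nat) \<Rightarrow>\<^sub>0 'k)" where
  "eta M lt g = (THE r. r \<in> Ky M \<and> g - r \<in> Tideal M \<and>
      (\<forall>\<alpha>\<in>Poly_Mapping.keys r. \<not> (\<exists>q\<in>Tideal M. q \<noteq> (0 :: (int^'n \<Rightarrow>\<^sub>0 nat) \<Rightarrow>\<^sub>0 'k) \<and> lm lt q = \<alpha>)))"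

definition phi :: "(real^'n) set \<Rightarrow> ((int^'n \<Rightarrow>\<^sub>0 nat) \<Rightarrow> (int^'n \<Rightarrow>\<^sub>0 nat) \<Rightarrow> bool)
    \<Rightarrow> (((int^'n) \<times> int) \<Rightarrow>\<^sub>0 'k::ab_group_add) \<Rightarrow> ((int^'n \<Rightarrow>\<^sub>0 nat) \<Rightarrow>\<^sub>0 'k)" where
  "phi M lt f = eta M lt (SOME g. g \<in> Ky M \<and> psi g = f)"

definition ydvd :: "(int^'n \<Rightarrow>\<^sub>0 nat) \<Rightarrow> (int^'n \<Rightarrow>\<^sub>0 nat) \<Rightarrow> bool" where
  "ydvd a b \<longleftrightarrow> (\<exists>c. b = a + c)"

definition groebner_basis :: "((int^'n \<Rightarrow>\<^sub>0 nat) \<Rightarrow> (int^'n \<Rightarrow>\<^sub>0 nat) \<Rightarrow> bool)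
    \<Rightarrow> ((int^'n \<Rightarrow>\<^sub>0 nat) \<Rightarrow>\<^sub>0 'k::zero) set \<Rightarrow> ((int^'n \<Rightarrow>\<^sub>0 nat) \<Rightarrow>\<^sub>0 'k) set \<Rightarrow> bool" where
  "groebner_basis lt J G \<longleftrightarrow> finite G \<and> G \<subseteq> J \<and>
     (\<forall>f\<in>J. f \<noteq> 0 \<longrightarrow> (\<exists>g\<in>G. g \<noteq> 0 \<and> ydvd (lm lt g) (lm lt f)))"

definition deltaA :: "(real^'n) set \<Rightarrow> int^'n \<Rightarrow> nat" where
  "deltaA M s = (LEAST d::nat. (s, int d) \<in> SMh M)"

definition sparse_less :: "(real^'n) set \<Rightarrow> (int^'n \<Rightarrow> int^'n \<Rightarrow> bool) \<Rightarrow> int^'n \<Rightarrow> int^'n \<Rightarrow> bool" where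
  "sparse_less M lessM s r \<longleftrightarrow> deltaA M s < deltaA M r \<or> (deltaA M s = deltaA M r \<and> lessM s r)"

definition hless :: "(real^'n) set \<Rightarrow> (int^'n \<Rightarrow> int^'n \<Rightarrow> bool) \<Rightarrow> (int^'n) \<times> int \<Rightarrow> (int^'n) \<times> int \<Rightarrow> bool" where
  "hless M lessM a b \<longleftrightarrow> snd a < snd b \<or> (snd a = snd b \<and> sparse_less M lessM (fst a) (fst b))"

definition delta_dvd :: "(real^'n) set \<Rightarrow> (int^'n) \<times> int \<Rightarrow> (int^'n) \<times> int \<Rightarrow> bool" where
  "delta_dvd M a b \<longleftrightarrow>
     (\<exists>t\<in>SMh M. a + t = b \<and> deltaA M (fst a) + deltaA M (fst t) = deltaA M (fst b))"

definition sparse_groebner_basis :: "(real^'n) set \<Rightarrow> (int^'n \<Rightarrow> int^'n \<Rightarrow> bool)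
    \<Rightarrow> (((int^'n) \<times> int) \<Rightarrow>\<^sub>0 'k::semiring_0) set \<Rightarrow> (((int^'n) \<times> int) \<Rightarrow>\<^sub>0 'k) set \<Rightarrow> bool" where
  "sparse_groebner_basis M lessM I G \<longleftrightarrow> G \<subseteq> I \<and> ideal_gen (KS (SMh M)) G = I \<and>
     (\<forall>f\<in>I. f \<noteq> 0 \<longrightarrow>
        (\<exists>g\<in>G. g \<noteq> 0 \<and> delta_dvd M (lm (hless M lessM) g) (lm (hless M lessM) f)))"

end

theory Submission
  imports Defs
begin

(*
  Every x in S_M^h has finitely many preimages under the exponent map psiexp of psi, and the
  <_y-least of them, std_exp x, is the exponent of the standard monomial over X^x.  The polynomial
  std_lift f = (sum of f_x y^(std_exp x)) is the normal form modulo T = ker psi of every preimage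
  of f, hence phi = std_lift.  Since <_y compares total degrees first and then prefers high powers
  of y_0, the standard monomial over (s, d) contains y_0 exactly d - deltaA s times.  Consequently
  std_exp is strictly monotone from the graded sparse order to <_y, so LM (phi f) = std_exp (LM f);
  and if LM g divides std_exp (LM f), both factors are standard, so comparing degrees and
  y_0-exponents shows that deltaA is additive along the factorization, which is sparse
  divisibility of LM (psi g) = psiexp (LM g) into LM f.  Generation of I by psi G follows from
  G generating J, psi J being contained in I and f = psi (phi f).
*)

section \<open>Lattice points of a polytope\<close>

lemma finite_lattice_pts:
  assumes "polytope M"
  shows "finite (lattice_pts M)"
proof -
  obtain B where B: "\<And>x. x \<in> M \<Longrightarrow> norm x \<le> B"
    using assms polytope_imp_compact compact_imp_bounded bounded_iff by metis
  define C where "C = \<lceil>B\<rceil>"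
  have "lattice_pts M \<subseteq> vec_lambda ` (UNIV \<rightarrow>\<^sub>E {-C..C})"
  proof
    fix s assume "s \<in> lattice_pts M"
    then have "norm (\<chi> i. real_of_int (s$i)) \<le> B" by (simp add: lattice_pts_def B)
    then have "real_of_int \<bar>s$i\<bar> \<le> B" for i
      using component_le_norm_cart[of "\<chi> i. real_of_int (s$i)" i] by simp
    then have "\<bar>s$i\<bar> \<le> C" for i
      unfolding C_def by (metis ceiling_mono ceiling_of_int)
    then have "s$i \<in> {-C..C}" for i
      by (metis abs_le_iff atLeastAtMost_iff minus_le_iff)
    then show "s \<in> vec_lambda ` (UNIV \<rightarrow>\<^sub>E {-C..C})"
      by (intro image_eqI[of _ _ "\<lambda>i. s$i"]) auto
  qed
  then show ?thesis by (rule finite_subset) (intro finite_imageI finite_PiE; simp)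
qed

lemma zero_in_lattice_pts: "0 \<in> M \<Longrightarrow> 0 \<in> lattice_pts M"
  by (simp add: lattice_pts_def vec_eq_iff flip: zero_vec_def)

section \<open>Ideals generated over a subring\<close>

lemma ideal_gen_add:
  assumes "x \<in> ideal_gen R B" "y \<in> ideal_gen R B"
  shows "x + y \<in> ideal_gen R B"
  using assms(1) by induction (auto simp: add.assoc intro: ideal_gen.intros assms(2))

lemma ideal_gen_mult:
  assumes "\<And>a b. a \<in> R \<Longrightarrow> b \<in> R \<Longrightarrow> a * b \<in> R" "r \<in> R" "x \<in> ideal_gen R B"
  shows "r * x \<in> ideal_gen R B"
  using assms(3)
proof induction
  case (ideal_gen_step r' b x)
  have "r * (r' * b + x) = (r * r') * b + r * x" by (simp add: algebra_simps)
  then show ?case using ideal_gen_step assms(1,2) by (auto intro: ideal_gen.intros)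
qed (simp add: ideal_gen.intros)

lemma ideal_gen_diff:
  fixes R :: "'a::ring set"
  assumes "\<And>a. a \<in> R \<Longrightarrow> - a \<in> R" "x \<in> ideal_gen R B" "y \<in> ideal_gen R B"
  shows "x - y \<in> ideal_gen R B"
proof -
  have "- y \<in> ideal_gen R B"
    using assms(3)
  proof induction
    case (ideal_gen_step r b x)
    have "(- r) * b + (- x) \<in> ideal_gen R B"
      by (rule ideal_gen.ideal_gen_step) (use ideal_gen_step assms(1) in auto)
    then show ?case by simp
  qed (simp add: ideal_gen.intros)
  from ideal_gen_add[OF assms(2) this] show ?thesis by simp
qed

lemma generator_in_ideal_gen:
  fixes R :: "'a::semiring_1 set"
  assumes "1 \<in> R" "b \<in> B"
  shows "b \<in> ideal_gen R B"
  using ideal_gen_step[OF assms ideal_gen_zero] by simp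

lemma ideal_gen_least:
  assumes "0 \<in> S" "\<And>r b x. r \<in> R \<Longrightarrow> b \<in> B \<Longrightarrow> x \<in> S \<Longrightarrow> r * b + x \<in> S"
  shows "ideal_gen R B \<subseteq> S"
proof
  fix x assume "x \<in> ideal_gen R B"
  then show "x \<in> S" by induction (use assms in auto)
qed

lemma ideal_gen_subset_ring:
  assumes "0 \<in> R" "\<And>a b. a \<in> R \<Longrightarrow> b \<in> R \<Longrightarrow> a + b \<in> R" "\<And>a b. a \<in> R \<Longrightarrow> b \<in> R \<Longrightarrow> a * b \<in> R"
    and "B \<subseteq> R"
  shows "ideal_gen R B \<subseteq> R"
  using assms by (intro ideal_gen_least) auto

lemma ideal_gen_mono:
  assumes "B' \<subseteq> ideal_gen R B" "\<And>a b. a \<in> R \<Longrightarrow> b \<in> R \<Longrightarrow> a * b \<in> R"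
  shows "ideal_gen R B' \<subseteq> ideal_gen R B"
proof (rule ideal_gen_least)
  fix r b x assume "r \<in> R" "b \<in> B'" "x \<in> ideal_gen R B"
  then show "r * b + x \<in> ideal_gen R B"
    using assms by (intro ideal_gen_add ideal_gen_mult) auto
qed (rule ideal_gen_zero)

lemma ideal_gen_image:
  assumes "\<And>x y. h (x + y) = h x + h y" "\<And>x y. h (x * y) = h x * h y" "h 0 = 0"
    and "h ` R \<subseteq> R'" "x \<in> ideal_gen R B"
  shows "h x \<in> ideal_gen R' (h ` B)"
  using assms(5)
proof induction
  case (ideal_gen_step r b x)
  have "h r * h b + h x \<in> ideal_gen R' (h ` B)"
    by (rule ideal_gen.ideal_gen_step) (use ideal_gen_step assms(4) in auto)
  then show ?case by (simp add: assms(1,2))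
qed (simp add: assms(3) ideal_gen.intros)

section \<open>Strict linear orders and leading monomials\<close>

locale strict_linear_on =
  fixes A :: "'a set" and r :: "'a \<Rightarrow> 'a \<Rightarrow> bool"
  assumes irrefl: "a \<in> A \<Longrightarrow> \<not> r a a"
    and trans: "a \<in> A \<Longrightarrow> b \<in> A \<Longrightarrow> c \<in> A \<Longrightarrow> r a b \<Longrightarrow> r b c \<Longrightarrow> r a c"
    and total: "a \<in> A \<Longrightarrow> b \<in> A \<Longrightarrow> a \<noteq> b \<Longrightarrow> r a b \<or> r b a"
begin

lemma asym: "a \<in> A \<Longrightarrow> b \<in> A \<Longrightarrow> r a b \<Longrightarrow> \<not> r b a"
  using irrefl trans by blast

lemma converse: "strict_linear_on A (\<lambda>a b. r b a)"
  by unfold_locales (use irrefl trans total in blast)+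

lemma finite_has_greatest:
  assumes "S \<subseteq> A" "finite S" "S \<noteq> {}"
  shows "\<exists>m\<in>S. \<forall>b\<in>S. b \<noteq> m \<longrightarrow> r b m"
  using assms(2,3,1)
proof (induction S rule: finite_ne_induct)
  case (insert x S)
  then obtain m where m: "m \<in> S" "\<forall>b\<in>S. b \<noteq> m \<longrightarrow> r b m" by auto
  show ?case
  proof (cases "r x m")
    case True
    with m show ?thesis by auto
  next
    case False
    moreover have "x \<noteq> m" "x \<in> A" "m \<in> A" using insert m by auto
    ultimately have "r m x" using total by blast
    have "r b x" if "b \<in> S" "b \<noteq> x" for b
    proof (cases "b = m")
      case False
      with that m have "r b m" by auto
      with \<open>r m x\<close> show ?thesis using trans that insert.prems m(1) by blast
    qed (use \<open>r m x\<close> in simp)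
    then show ?thesis by blast
  qed
qed simp

lemma lm_eqI:
  assumes "Poly_Mapping.keys p \<subseteq> A"
    and "a \<in> Poly_Mapping.keys p" "\<forall>b\<in>Poly_Mapping.keys p. b \<noteq> a \<longrightarrow> r b a"
  shows "lm r p = a"
  unfolding lm_def
proof (rule the_equality)
  fix c assume c: "c \<in> Poly_Mapping.keys p \<and> (\<forall>b\<in>Poly_Mapping.keys p. b \<noteq> c \<longrightarrow> r b c)"
  show "c = a"
  proof (rule ccontr)
    assume "c \<noteq> a"
    then have "r c a" "r a c" using c assms(2,3) by auto
    then show False using asym c assms(1,2) by blast
  qed
qed (use assms(2,3) in blast)

lemma lm_greatest:
  assumes "Poly_Mapping.keys p \<subseteq> A" "p \<noteq> 0"
  shows "lm r p \<in> Poly_Mapping.keys p" "\<forall>b\<in>Poly_Mapping.keys p. b \<noteq> lm r p \<longrightarrow> r b (lm r p)"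
proof -
  obtain m where "m \<in> Poly_Mapping.keys p" "\<forall>b\<in>Poly_Mapping.keys p. b \<noteq> m \<longrightarrow> r b m"
    using finite_has_greatest[OF assms(1)] assms(2) by auto
  moreover from this have "lm r p = m" by (rule lm_eqI[OF assms(1)])
  ultimately show "lm r p \<in> Poly_Mapping.keys p" "\<forall>b\<in>Poly_Mapping.keys p. b \<noteq> lm r p \<longrightarrow> r b (lm r p)"
    by simp_all
qed

end

lemma strict_linear_on_subset:
  assumes "strict_linear_on A r" "B \<subseteq> A"
  shows "strict_linear_on B r"
proof -
  interpret strict_linear_on A r by fact
  show ?thesis
  proof
    fix a b c assume "a \<in> B" "b \<in> B" "c \<in> B"
    with assms(2) have abc: "a \<in> A" "b \<in> A" "c \<in> A" by auto
    show "\<not> r a a" by (rule irrefl[OF abc(1)])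
    show "r a b \<Longrightarrow> r b c \<Longrightarrow> r a c" by (rule trans[OF abc])
    show "a \<noteq> b \<Longrightarrow> r a b \<or> r b a" by (rule total[OF abc(1,2)])
  qed
qed

lemma strict_linear_on_less: "strict_linear_on A ((<) :: 'a::linorder \<Rightarrow> 'a \<Rightarrow> bool)"
  by unfold_locales auto

lemma strict_linear_on_pullback:
  assumes "strict_linear_on (f ` A) r" "inj_on f A"
  shows "strict_linear_on A (\<lambda>a b. r (f a) (f b))"
proof -
  interpret strict_linear_on "f ` A" r by fact
  show ?thesis
  proof
    fix a b c assume abc: "a \<in> A" "b \<in> A" "c \<in> A"
    show "\<not> r (f a) (f a)" using irrefl[of "f a"] abc by simp
    show "r (f a) (f b) \<Longrightarrow> r (f b) (f c) \<Longrightarrow> r (f a) (f c)"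
      using trans[of "f a" "f b" "f c"] abc by simp
    show "a \<noteq> b \<Longrightarrow> r (f a) (f b) \<or> r (f b) (f a)"
      using total[of "f a" "f b"] abc assms(2) by (auto dest: inj_onD)
  qed
qed

lemma strict_linear_on_lex:
  assumes r: "strict_linear_on (f ` A) r" and s: "\<And>c. strict_linear_on (A \<inter> f -` {c}) s"
  shows "strict_linear_on A (\<lambda>a b. r (f a) (f b) \<or> f a = f b \<and> s a b)"
proof
  fix a assume "a \<in> A"
  then show "\<not> (r (f a) (f a) \<or> f a = f a \<and> s a a)"
    using strict_linear_on.irrefl[OF r, of "f a"] strict_linear_on.irrefl[OF s[of "f a"], of a] by auto
next
  fix a b c assume abc: "a \<in> A" "b \<in> A" "c \<in> A"
  have fibre: "a \<in> A \<inter> f -` {f a}" "b \<in> A \<inter> f -` {f b}" "c \<in> A \<inter> f -` {f c}"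
    using abc by simp_all
  assume ab: "r (f a) (f b) \<or> f a = f b \<and> s a b" and bc: "r (f b) (f c) \<or> f b = f c \<and> s b c"
  show "r (f a) (f c) \<or> f a = f c \<and> s a c"
  proof (cases "f a = f b \<and> f b = f c")
    case True
    with ab bc fibre strict_linear_on.irrefl[OF r, of "f a"] abc have "s a b" "s b c" by auto
    with True fibre show ?thesis using strict_linear_on.trans[OF s[of "f a"], of a b c] by simp
  next
    case False
    with ab bc have "r (f a) (f b) \<and> r (f b) (f c) \<or> r (f a) (f b) \<and> f b = f c \<or> f a = f b \<and> r (f b) (f c)"
      by blast
    then show ?thesis using strict_linear_on.trans[OF r, of "f a" "f b" "f c"] abc by auto
  qed
next
  fix a b assume abc: "a \<in> A" "b \<in> A"
  show "a \<noteq> b \<Longrightarrow> (r (f a) (f b) \<or> f a = f b \<and> s a b) \<or> (r (f b) (f a) \<or> f b = f a \<and> s b a)"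
    using strict_linear_on.total[OF r, of "f a" "f b"] strict_linear_on.total[OF s[of "f a"], of a b] abc
    by (cases "f a = f b") auto
qed

lemma monomial_order_strict_linear_on: "monomial_order E r \<Longrightarrow> strict_linear_on E r"
  unfolding monomial_order_def strict_linear_on_def by (elim conjE) (intro conjI; blast)

lemma monomial_order_add_right:
  assumes "monomial_order E r" "a \<in> E" "b \<in> E" "c \<in> E" "r a b"
  shows "r (a + c) (b + c)"
proof -
  from assms(1) have "\<forall>a\<in>E. \<forall>b\<in>E. \<forall>c\<in>E. r a b \<longrightarrow> r (a + c) (b + c)"
    unfolding monomial_order_def by (elim conjE)
  with assms(2-5) show ?thesis by blast
qed

section \<open>Monomials of K[y] and the map psi\<close>

lemma keys_add_nat: "Poly_Mapping.keys (a + b) = Poly_Mapping.keys a \<union> Poly_Mapping.keys (b :: 'a \<Rightarrow>\<^sub>0 nat)"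
  by (auto simp: in_keys_iff lookup_add)

lemma sum_single_lookup: "(\<Sum>a\<in>Poly_Mapping.keys p. Poly_Mapping.single a (Poly_Mapping.lookup p a)) = p"
  by (rule poly_mapping_eqI) (simp add: lookup_sum lookup_single when_def in_keys_iff)

lemma lookup_single_mult:
  fixes g :: "'a::cancel_comm_monoid_add \<Rightarrow>\<^sub>0 'k::semiring_0"
  shows "Poly_Mapping.lookup (Poly_Mapping.single d c * g) (d + b) = c * Poly_Mapping.lookup g b"
proof -
  have "Poly_Mapping.single d c * g
      = (\<Sum>b'\<in>Poly_Mapping.keys g. Poly_Mapping.single (d + b') (c * Poly_Mapping.lookup g b'))"
    by (subst (1) sum_single_lookup[of g, symmetric]) (simp add: sum_distrib_left mult_single)
  then show ?thesis
    by (simp add: lookup_sum lookup_single when_def in_keys_iff sum.delta' cong: if_cong)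
qed

lemma keys_single_mult:
  "Poly_Mapping.keys (Poly_Mapping.single d c * g) \<subseteq> (\<lambda>b. d + b) ` Poly_Mapping.keys g"
  using keys_mult[of "Poly_Mapping.single d c" g] by (auto split: if_splits)

lemma psiexp_eq_sum:
  assumes "finite S" "Poly_Mapping.keys a \<subseteq> S"
  shows "psiexp a = ((\<Sum>s\<in>S. of_nat (Poly_Mapping.lookup a s) *s s), int (\<Sum>s\<in>S. Poly_Mapping.lookup a s))"
proof -
  have "(\<Sum>s\<in>Poly_Mapping.keys a. of_nat (Poly_Mapping.lookup a s) *s s)
      = (\<Sum>s\<in>S. of_nat (Poly_Mapping.lookup a s) *s s)"
    "(\<Sum>s\<in>Poly_Mapping.keys a. Poly_Mapping.lookup a s) = (\<Sum>s\<in>S. Poly_Mapping.lookup a s)"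
    by (rule sum.mono_neutral_left; use assms in \<open>auto simp: in_keys_iff\<close>)+
  then show ?thesis unfolding psiexp_def ydeg_def by simp
qed

lemma psiexp_add: "psiexp (a + b) = psiexp a + psiexp b"
proof -
  let ?S = "Poly_Mapping.keys a \<union> Poly_Mapping.keys b"
  have "finite ?S" by simp
  from psiexp_eq_sum[OF this, of a] psiexp_eq_sum[OF this, of b] psiexp_eq_sum[OF this, of "a + b"]
  show ?thesis by (simp add: keys_add_nat lookup_add vector_sadd_rdistrib sum.distrib)
qed

lemma psiexp_zero [simp]: "psiexp 0 = 0"
  by (simp add: psiexp_def ydeg_def zero_prod_def)

lemma psiexp_sum: "psiexp (sum f S) = (\<Sum>i\<in>S. psiexp (f i))"
  by (induction S rule: infinite_finite_induct) (simp_all add: psiexp_add)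

lemma psiexp_single: "psiexp (Poly_Mapping.single s k) = (of_nat k *s s, int k)"
  by (simp add: psiexp_def ydeg_def zero_prod_def)

lemma snd_psiexp: "snd (psiexp a) = int (ydeg a)"
  by (simp add: psiexp_def)

lemma ydeg_add: "ydeg (a + b) = ydeg a + ydeg b"
  using arg_cong[OF psiexp_add[of a b], of snd] by (simp add: snd_psiexp)

lemma ydeg_single: "ydeg (Poly_Mapping.single s k) = k"
  by (simp add: ydeg_def)

lemma lookup_le_ydeg: "Poly_Mapping.lookup a s \<le> ydeg a"
  unfolding ydeg_def by (cases "s \<in> Poly_Mapping.keys a") (auto simp: in_keys_iff intro: member_le_sum)

lemma Ey_add_iff: "a + b \<in> Ey M \<longleftrightarrow> a \<in> Ey M \<and> b \<in> Ey M"
  by (auto simp: Ey_def keys_add_nat)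

lemma zero_in_Ey: "0 \<in> Ey M"
  by (simp add: Ey_def)

lemma single_in_Ey: "s \<in> lattice_pts M \<Longrightarrow> Poly_Mapping.single s k \<in> Ey M"
  by (simp add: Ey_def)

lemma finite_Ey_ydeg_le:
  assumes "finite (lattice_pts M)"
  shows "finite {a \<in> Ey M. ydeg a \<le> d}"
proof -
  define F where "F = {f. \<forall>s. (s \<in> lattice_pts M \<longrightarrow> f s \<in> {0..d}) \<and> (s \<notin> lattice_pts M \<longrightarrow> f s = 0)}"
  have "Poly_Mapping.lookup a \<in> F" if "a \<in> Ey M" "ydeg a \<le> d" for a
  proof -
    have "Poly_Mapping.lookup a s = 0" if "s \<notin> lattice_pts M" for s
      using \<open>a \<in> Ey M\<close> that by (auto simp: Ey_def in_keys_iff)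
    then show ?thesis
      using lookup_le_ydeg[of a] \<open>ydeg a \<le> d\<close> by (auto simp: F_def intro: order_trans)
  qed
  then have "Poly_Mapping.lookup ` {a \<in> Ey M. ydeg a \<le> d} \<subseteq> F" by blast
  moreover have "finite F"
    unfolding F_def using assms by (intro finite_set_of_finite_funs) auto
  ultimately have "finite (Poly_Mapping.lookup ` {a \<in> Ey M. ydeg a \<le> d})"
    by (rule finite_subset)
  then show ?thesis
    by (rule finite_imageD) (simp add: inj_on_def poly_mapping.lookup_inject)
qed

lemma SMh_add_closed: "x \<in> SMh M \<Longrightarrow> y \<in> SMh M \<Longrightarrow> x + y \<in> SMh M"
  by (induction x rule: SMh.induct) (simp_all add: add.assoc SMh.intros flip: zero_prod_def)

lemma zero_in_SMh: "0 \<in> SMh M"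
  by (simp add: zero_prod_def SMh_zero)

lemma sum_in_SMh: "(\<And>i. i \<in> S \<Longrightarrow> f i \<in> SMh M) \<Longrightarrow> sum f S \<in> SMh M"
  by (induction S rule: infinite_finite_induct) (simp_all add: zero_in_SMh SMh_add_closed)

lemma fst_SMh: "x \<in> SMh M \<Longrightarrow> fst x \<in> SM M"
  by (induction x rule: SMh.induct) (auto intro: SM.intros)

lemma snd_SMh_nonneg: "x \<in> SMh M \<Longrightarrow> 0 \<le> snd x"
  by (induction x rule: SMh.induct) auto

lemma psiexp_single_in_SMh:
  assumes "s \<in> lattice_pts M"
  shows "psiexp (Poly_Mapping.single s k) \<in> SMh M"
proof (induction k)
  case (Suc k)
  have "(s, 1) + psiexp (Poly_Mapping.single s k) \<in> SMh M"
    using assms Suc by (rule SMh_add)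
  then show ?case by (simp add: psiexp_single algebra_simps vec_eq_iff)
qed (simp add: zero_in_SMh)

lemma psiexp_Ey_eq_SMh: "psiexp ` Ey M = SMh M"
proof
  show "psiexp ` Ey M \<subseteq> SMh M"
  proof (rule image_subsetI)
    fix a assume "a \<in> Ey M"
    have "psiexp a = (\<Sum>s\<in>Poly_Mapping.keys a. psiexp (Poly_Mapping.single s (Poly_Mapping.lookup a s)))"
      by (subst (1) sum_single_lookup[of a, symmetric]) (rule psiexp_sum)
    also have "\<dots> \<in> SMh M"
      using \<open>a \<in> Ey M\<close> unfolding Ey_def
      by (intro sum_in_SMh psiexp_single_in_SMh) auto
    finally show "psiexp a \<in> SMh M" .
  qed
  show "SMh M \<subseteq> psiexp ` Ey M"
  proof
    fix x assume "x \<in> SMh M"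
    then show "x \<in> psiexp ` Ey M"
    proof induction
      case SMh_zero
      show ?case using zero_in_Ey psiexp_zero by (metis image_eqI zero_prod_def)
    next
      case (SMh_add s x)
      then obtain a where "a \<in> Ey M" "x = psiexp a" by blast
      with SMh_add.hyps have "Poly_Mapping.single s 1 + a \<in> Ey M" "(s, 1) + x = psiexp (Poly_Mapping.single s 1 + a)"
        by (simp_all add: Ey_add_iff single_in_Ey psiexp_add psiexp_single)
      then show ?case by blast
    qed
  qed
qed

lemma psiexp_in_SMh: "a \<in> Ey M \<Longrightarrow> psiexp a \<in> SMh M"
  using psiexp_Ey_eq_SMh by blast

lemma SMh_obtain_preimage:
  assumes "x \<in> SMh M"
  obtains a where "a \<in> Ey M" "psiexp a = x"
  using assms psiexp_Ey_eq_SMh by (metis imageE)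

lemma deltaA_le: "(s, int k) \<in> SMh M \<Longrightarrow> deltaA M s \<le> k"
  unfolding deltaA_def by (rule Least_le)

lemma deltaA_in_SMh:
  assumes "(s, d) \<in> SMh M"
  shows "(s, int (deltaA M s)) \<in> SMh M"
proof -
  from assms have "(s, int (nat d)) \<in> SMh M"
    using snd_SMh_nonneg by fastforce
  then show ?thesis unfolding deltaA_def by (rule LeastI)
qed

lemma lookup_zero_add_deltaA_le_ydeg:
  assumes "a \<in> Ey M"
  shows "Poly_Mapping.lookup a 0 + deltaA M (fst (psiexp a)) \<le> ydeg a"
proof -
  define k where "k = Poly_Mapping.lookup a 0"
  define a' where "a' = Poly_Mapping.update 0 0 a"
  have a: "a = a' + Poly_Mapping.single 0 k"
    unfolding a'_def k_def
    by (rule poly_mapping_eqI) (simp add: lookup_add lookup_update lookup_single when_def)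
  then have "a' \<in> Ey M" using assms Ey_add_iff by metis
  moreover have "psiexp a' = (fst (psiexp a), int (ydeg a'))"
    by (subst a) (simp add: psiexp_add psiexp_single prod_eq_iff snd_psiexp)
  ultimately have "deltaA M (fst (psiexp a)) \<le> ydeg a'"
    using psiexp_Ey_eq_SMh by (metis deltaA_le image_eqI)
  moreover have "ydeg a = ydeg a' + k"
    by (subst a) (simp add: ydeg_add ydeg_single)
  ultimately show ?thesis unfolding k_def by simp
qed

lemma lookup_psi:
  "Poly_Mapping.lookup (psi p) x = (\<Sum>a\<in>Poly_Mapping.keys p. if psiexp a = x then Poly_Mapping.lookup p a else 0)"
  unfolding psi_def by (simp add: lookup_sum lookup_single when_def)

lemma keys_psi: "Poly_Mapping.keys (psi p) \<subseteq> psiexp ` Poly_Mapping.keys p"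
  unfolding psi_def
  using keys_sum[of "\<lambda>a. Poly_Mapping.single (psiexp a) (Poly_Mapping.lookup p a)" "Poly_Mapping.keys p"]
  by (auto split: if_splits)

lemma psi_zero [simp]: "psi 0 = 0"
  by (simp add: psi_def)

lemma psi_single: "psi (Poly_Mapping.single a c) = Poly_Mapping.single (psiexp a) c"
  by (cases "c = 0") (simp_all add: psi_def)

lemma psi_add: "psi (p + q) = psi p + psi q"
proof (rule poly_mapping_eqI)
  fix x
  let ?S = "Poly_Mapping.keys p \<union> Poly_Mapping.keys q"
  have "Poly_Mapping.lookup (psi r) x = (\<Sum>a\<in>?S. if psiexp a = x then Poly_Mapping.lookup r a else 0)"
    if "Poly_Mapping.keys r \<subseteq> ?S" for r
    unfolding lookup_psi by (rule sum.mono_neutral_left) (use that in \<open>auto simp: in_keys_iff\<close>)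
  from this[of p] this[of q] this[of "p + q"] keys_add[of p q]
  show "Poly_Mapping.lookup (psi (p + q)) x = Poly_Mapping.lookup (psi p + psi q) x"
    by (simp add: lookup_add flip: sum.distrib) (rule sum.cong; simp add: lookup_add)
qed

lemma psi_diff: "psi (p - q) = psi p - psi (q :: _ \<Rightarrow>\<^sub>0 'k::ab_group_add)"
  using psi_add[of "p - q" q] by (simp add: eq_diff_eq)

lemma psi_sum: "psi (sum f S) = (\<Sum>i\<in>S. psi (f i))"
  by (induction S rule: infinite_finite_induct) (simp_all add: psi_add)

lemma psi_mult: "psi (p * q) = psi p * psi (q :: _ \<Rightarrow>\<^sub>0 'k::comm_semiring_1)"
proof -
  let ?m = "\<lambda>p a. Poly_Mapping.single a (Poly_Mapping.lookup p a)"
  have "p * q = (\<Sum>a\<in>Poly_Mapping.keys p. \<Sum>b\<in>Poly_Mapping.keys q. ?m p a * ?m q b)"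
    by (subst (1 2) sum_single_lookup[symmetric]) (rule sum_product)
  then have "psi (p * q) = (\<Sum>a\<in>Poly_Mapping.keys p. \<Sum>b\<in>Poly_Mapping.keys q. psi (?m p a) * psi (?m q b))"
    by (simp add: psi_sum mult_single psi_single psiexp_add)
  also have "\<dots> = psi p * psi q"
    by (subst (3 4) sum_single_lookup[symmetric]) (simp add: psi_sum sum_product)
  finally show ?thesis .
qed

lemma zero_in_KS: "0 \<in> KS S"
  by (simp add: KS_def)

lemma KS_add: "p \<in> KS S \<Longrightarrow> q \<in> KS S \<Longrightarrow> p + q \<in> KS S"
  using keys_add by (fastforce simp: KS_def)

lemma KS_SMh_mult: "p \<in> KS (SMh M) \<Longrightarrow> q \<in> KS (SMh M) \<Longrightarrow> p * q \<in> KS (SMh M)"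
  unfolding KS_def using keys_mult[of p q] SMh_add_closed by fastforce

lemma zero_in_Ky: "0 \<in> Ky M"
  by (simp add: Ky_def)

lemma one_in_Ky: "1 \<in> Ky M"
  by (simp add: Ky_def zero_in_Ey)

lemma Ky_add: "p \<in> Ky M \<Longrightarrow> q \<in> Ky M \<Longrightarrow> p + q \<in> Ky M"
  using keys_add by (fastforce simp: Ky_def)

lemma Ky_uminus: "p \<in> Ky M \<Longrightarrow> - (p :: _ \<Rightarrow>\<^sub>0 'k::ab_group_add) \<in> Ky M"
  by (simp add: Ky_def)

lemma Ky_diff: "p \<in> Ky M \<Longrightarrow> q \<in> Ky M \<Longrightarrow> p - (q :: _ \<Rightarrow>\<^sub>0 'k::ab_group_add) \<in> Ky M"
  using Ky_add[of p M "- q"] Ky_uminus[of q M] by simp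

lemma Ky_mult: "p \<in> Ky M \<Longrightarrow> q \<in> Ky M \<Longrightarrow> p * q \<in> Ky M"
  unfolding Ky_def using keys_mult[of p q] by (fastforce simp: Ey_add_iff)

lemma Tideal_diff: "p \<in> Tideal M \<Longrightarrow> q \<in> Tideal M \<Longrightarrow> p - (q :: _ \<Rightarrow>\<^sub>0 'k::ab_group_add) \<in> Tideal M"
  by (simp add: Tideal_def Ky_diff psi_diff)

lemma psi_Ky_subset_KS: "p \<in> Ky M \<Longrightarrow> psi p \<in> KS (SMh M)"
  unfolding KS_def Ky_def using keys_psi[of p] psiexp_Ey_eq_SMh by fastforce

lemma psi_ideal_gen:
  fixes S :: "((int^'n \<Rightarrow>\<^sub>0 nat) \<Rightarrow>\<^sub>0 'k::comm_semiring_1) set"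
  assumes "p \<in> ideal_gen (Ky M) S"
  shows "psi p \<in> ideal_gen (KS (SMh M)) (psi ` S)"
  using assms psi_Ky_subset_KS by (intro ideal_gen_image) (auto simp: psi_add psi_mult)

section \<open>The orders on exponents\<close>

locale sparse_setting =
  fixes M :: "(real^'n) set" and lessM :: "int^'n \<Rightarrow> int^'n \<Rightarrow> bool"
    and tilde :: "(int^'n \<Rightarrow>\<^sub>0 nat) \<Rightarrow> (int^'n \<Rightarrow>\<^sub>0 nat) \<Rightarrow> bool"
  assumes finite_lattice: "finite (lattice_pts M)"
    and zero_lattice: "0 \<in> lattice_pts M"
    and monomial_order_lessM: "monomial_order (SM M) lessM"
    and monomial_order_tilde: "monomial_order (Ey M) tilde"
begin

abbreviation lt_y :: "(int^'n \<Rightarrow>\<^sub>0 nat) \<Rightarrow> (int^'n \<Rightarrow>\<^sub>0 nat) \<Rightarrow> bool" where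
  "lt_y \<equiv> less_y lessM tilde"

abbreviation lt_h :: "(int^'n) \<times> int \<Rightarrow> (int^'n) \<times> int \<Rightarrow> bool" where
  "lt_h \<equiv> hless M lessM"

lemma fst_psiexp_SM: "a \<in> Ey M \<Longrightarrow> fst (psiexp a) \<in> SM M"
  using psiexp_in_SMh fst_SMh by blast

lemma strict_linear_less_y: "strict_linear_on (Ey M) lt_y"
proof -
  have lessM: "strict_linear_on (SM M) lessM" and tilde: "strict_linear_on (Ey M) tilde"
    using monomial_order_lessM monomial_order_tilde by (simp_all add: monomial_order_strict_linear_on)
  have inner: "strict_linear_on B
      (\<lambda>a b. lessM (fst (psiexp a)) (fst (psiexp b)) \<or> fst (psiexp a) = fst (psiexp b) \<and> tilde a b)"
    if "B \<subseteq> Ey M" for B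
    using that fst_psiexp_SM
    by (intro strict_linear_on_lex[where f = "\<lambda>a. fst (psiexp a)"] strict_linear_on_subset[OF lessM]
        strict_linear_on_subset[OF tilde]) auto
  have middle: "strict_linear_on B (\<lambda>a b. Poly_Mapping.lookup b 0 < Poly_Mapping.lookup a 0 \<or>
      Poly_Mapping.lookup a 0 = Poly_Mapping.lookup b 0 \<and>
      (lessM (fst (psiexp a)) (fst (psiexp b)) \<or> fst (psiexp a) = fst (psiexp b) \<and> tilde a b))"
    if "B \<subseteq> Ey M" for B
    using that
    by (intro strict_linear_on_lex[where f = "\<lambda>a. Poly_Mapping.lookup a 0" and r = "\<lambda>x y. y < x"]
        strict_linear_on.converse[OF strict_linear_on_less] inner) auto
  show ?thesis
    unfolding less_y_def[abs_def]
    by (intro strict_linear_on_lex[where f = ydeg and r = "(<)"] strict_linear_on_less middle) auto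
qed

sublocale less_y: strict_linear_on "Ey M" lt_y
  by (rule strict_linear_less_y)

lemma less_y_add_right:
  assumes "a \<in> Ey M" "b \<in> Ey M" "c \<in> Ey M" "lt_y a b"
  shows "lt_y (a + c) (b + c)"
proof -
  have "lessM (fst (psiexp a)) (fst (psiexp b)) \<Longrightarrow> lessM (fst (psiexp (a + c))) (fst (psiexp (b + c)))"
    using monomial_order_add_right[OF monomial_order_lessM] fst_psiexp_SM assms(1-3)
    by (simp add: psiexp_add)
  moreover have "tilde a b \<Longrightarrow> tilde (a + c) (b + c)"
    using monomial_order_add_right[OF monomial_order_tilde] assms(1-3) by simp
  ultimately show ?thesis
    using assms(4) unfolding less_y_def by (auto simp: ydeg_add lookup_add psiexp_add)
qed

lemma wf_less_y: "wf {(b, a). a \<in> Ey M \<and> b \<in> Ey M \<and> lt_y b a}"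
proof (rule wf_finite_segments)
  show "irrefl {(b, a). a \<in> Ey M \<and> b \<in> Ey M \<and> lt_y b a}"
    using less_y.irrefl by (auto simp: irrefl_def)
  show "trans {(b, a). a \<in> Ey M \<and> b \<in> Ey M \<and> lt_y b a}"
    using less_y.trans by (auto simp: trans_def)
  fix a
  have "{b. (b, a) \<in> {(b, a). a \<in> Ey M \<and> b \<in> Ey M \<and> lt_y b a}} \<subseteq> {b \<in> Ey M. ydeg b \<le> ydeg a}"
    by (auto simp: less_y_def)
  then show "finite {b. (b, a) \<in> {(b, a). a \<in> Ey M \<and> b \<in> Ey M \<and> lt_y b a}}"
    using finite_Ey_ydeg_le[OF finite_lattice] by (rule finite_subset)
qed

lemma strict_linear_hless: "strict_linear_on (SMh M) lt_h"
proof -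
  have lessM: "strict_linear_on (SM M) lessM"
    using monomial_order_lessM by (rule monomial_order_strict_linear_on)
  have inner: "strict_linear_on B (\<lambda>x y. lessM (fst x) (fst y))" if "B \<subseteq> SMh M \<inter> snd -` {d}" for B d
  proof (rule strict_linear_on_pullback)
    show "strict_linear_on (fst ` B) lessM"
      using that fst_SMh by (intro strict_linear_on_subset[OF lessM]) auto
    show "inj_on fst B"
    proof (rule inj_onI)
      fix x y assume "x \<in> B" "y \<in> B" "fst x = fst y"
      moreover from that \<open>x \<in> B\<close> \<open>y \<in> B\<close> have "snd x = snd y" by auto
      ultimately show "x = y" by (simp add: prod_eq_iff)
    qed
  qed
  have middle: "strict_linear_on B (\<lambda>x y. sparse_less M lessM (fst x) (fst y))"
    if "B \<subseteq> SMh M \<inter> snd -` {d}" for B d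
    unfolding sparse_less_def using that
    by (intro strict_linear_on_lex[where f = "\<lambda>x. deltaA M (fst x)" and r = "(<)"] strict_linear_on_less inner)
      auto
  show ?thesis
    unfolding hless_def[abs_def]
    by (intro strict_linear_on_lex[where f = snd and r = "(<)"] strict_linear_on_less middle) auto
qed

sublocale hless: strict_linear_on "SMh M" lt_h
  by (rule strict_linear_hless)

lemma lm_less_y_in_keys: "p \<in> Ky M \<Longrightarrow> p \<noteq> 0 \<Longrightarrow> lm lt_y p \<in> Poly_Mapping.keys p"
  by (rule less_y.lm_greatest(1)) (simp_all add: Ky_def)

lemma lm_less_y_in_Ey: "p \<in> Ky M \<Longrightarrow> p \<noteq> 0 \<Longrightarrow> lm lt_y p \<in> Ey M"
  using lm_less_y_in_keys by (auto simp: Ky_def)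

section \<open>Standard exponents\<close>

definition std_exp :: "(int^'n) \<times> int \<Rightarrow> (int^'n \<Rightarrow>\<^sub>0 nat)" where
  "std_exp x = (SOME m. m \<in> Ey M \<and> psiexp m = x \<and> (\<forall>b\<in>Ey M. psiexp b = x \<longrightarrow> b \<noteq> m \<longrightarrow> lt_y m b))"

lemma std_exp:
  assumes "x \<in> SMh M"
  shows std_exp_in_Ey: "std_exp x \<in> Ey M"
    and psiexp_std_exp: "psiexp (std_exp x) = x"
    and std_exp_least: "\<And>b. b \<in> Ey M \<Longrightarrow> psiexp b = x \<Longrightarrow> b \<noteq> std_exp x \<Longrightarrow> lt_y (std_exp x) b"
proof -
  let ?F = "{a \<in> Ey M. psiexp a = x}"
  have "?F \<subseteq> {a \<in> Ey M. ydeg a \<le> nat (snd x)}"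
    by (auto simp: snd_psiexp)
  then have "finite ?F"
    using finite_Ey_ydeg_le[OF finite_lattice] by (rule finite_subset)
  moreover have "?F \<noteq> {}"
    using SMh_obtain_preimage[OF assms] by blast
  ultimately obtain m where "m \<in> ?F" "\<forall>b\<in>?F. b \<noteq> m \<longrightarrow> lt_y m b"
    using strict_linear_on.finite_has_greatest[OF less_y.converse, of ?F] by auto
  then have "\<exists>m. m \<in> Ey M \<and> psiexp m = x \<and> (\<forall>b\<in>Ey M. psiexp b = x \<longrightarrow> b \<noteq> m \<longrightarrow> lt_y m b)"
    by blast
  from someI_ex[OF this, folded std_exp_def]
  show "std_exp x \<in> Ey M" "psiexp (std_exp x) = x"
    "\<And>b. b \<in> Ey M \<Longrightarrow> psiexp b = x \<Longrightarrow> b \<noteq> std_exp x \<Longrightarrow> lt_y (std_exp x) b"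
    by blast+
qed

lemma ydeg_std_exp: "x \<in> SMh M \<Longrightarrow> int (ydeg (std_exp x)) = snd x"
  using arg_cong[OF psiexp_std_exp, of x snd] by (simp add: snd_psiexp)

lemma std_exp_eqI:
  assumes "a \<in> Ey M" "\<And>b. b \<in> Ey M \<Longrightarrow> psiexp b = psiexp a \<Longrightarrow> b \<noteq> a \<Longrightarrow> lt_y a b"
  shows "std_exp (psiexp a) = a"
proof (rule ccontr)
  assume ne: "std_exp (psiexp a) \<noteq> a"
  have x: "psiexp a \<in> SMh M" using assms(1) by (rule psiexp_in_SMh)
  have "lt_y (std_exp (psiexp a)) a" using std_exp_least[OF x assms(1) refl] ne by simp
  moreover have "lt_y a (std_exp (psiexp a))" using assms(2) std_exp_in_Ey[OF x] psiexp_std_exp[OF x] ne by simp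
  ultimately show False using less_y.asym assms(1) std_exp_in_Ey[OF x] by blast
qed

lemma std_exp_inj: "inj_on std_exp (SMh M)"
  by (rule inj_on_inverseI[where g = psiexp]) (rule psiexp_std_exp)

lemma lookup_zero_std_exp:
  assumes x: "x \<in> SMh M"
  shows "Poly_Mapping.lookup (std_exp x) 0 + deltaA M (fst x) = nat (snd x)"
proof -
  obtain s d where x_eq: "x = (s, int d)"
    using snd_SMh_nonneg[OF x] by (metis nonneg_int_cases prod.collapse)
  have ydeg_std: "ydeg (std_exp x) = d"
    using ydeg_std_exp[OF x] x_eq by simp
  have "Poly_Mapping.lookup (std_exp x) 0 + deltaA M s \<le> d"
    using lookup_zero_add_deltaA_le_ydeg[OF std_exp_in_Ey[OF x]] psiexp_std_exp[OF x] ydeg_std x_eq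
    by simp
  moreover have "d - deltaA M s \<le> Poly_Mapping.lookup (std_exp x) 0" and "deltaA M s \<le> d"
  proof -
    \<comment> \<open>Pad a preimage of (s, deltaA s) with powers of y_0 to get a competitor in the fibre of x.\<close>
    have "(s, int (deltaA M s)) \<in> SMh M"
      using deltaA_in_SMh x x_eq by blast
    then obtain b where b: "b \<in> Ey M" "psiexp b = (s, int (deltaA M s))"
      by (rule SMh_obtain_preimage)
    show "deltaA M s \<le> d"
      using deltaA_le x x_eq by blast
    define a where "a = b + Poly_Mapping.single 0 (d - deltaA M s)"
    have "a \<in> Ey M"
      unfolding a_def using b(1) zero_lattice by (simp add: Ey_add_iff single_in_Ey)
    moreover have "psiexp a = x"
      unfolding a_def using b(2) \<open>deltaA M s \<le> d\<close> x_eq by (simp add: psiexp_add psiexp_single)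
    ultimately have "a = std_exp x \<or> lt_y (std_exp x) a"
      using std_exp_least[OF x] by blast
    moreover have "ydeg a = d"
      using arg_cong[OF \<open>psiexp a = x\<close>, of snd] x_eq by (simp add: snd_psiexp)
    ultimately have "Poly_Mapping.lookup a 0 \<le> Poly_Mapping.lookup (std_exp x) 0"
      using ydeg_std by (auto simp: less_y_def)
    then show "d - deltaA M s \<le> Poly_Mapping.lookup (std_exp x) 0"
      unfolding a_def by (simp add: lookup_add)
  qed
  ultimately show ?thesis using x_eq by simp
qed

lemma lookup_zero_std_exp_psiexp:
  assumes "a \<in> Ey M" "std_exp (psiexp a) = a"
  shows "Poly_Mapping.lookup a 0 + deltaA M (fst (psiexp a)) = ydeg a"
  using lookup_zero_std_exp[OF psiexp_in_SMh[OF assms(1)]] assms(2) by (simp add: snd_psiexp)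

lemma std_exp_mono:
  assumes "x \<in> SMh M" "y \<in> SMh M" "lt_h x y"
  shows "lt_y (std_exp x) (std_exp y)"
  using assms(3) lookup_zero_std_exp[OF assms(1)] lookup_zero_std_exp[OF assms(2)]
    ydeg_std_exp[OF assms(1)] ydeg_std_exp[OF assms(2)]
  unfolding hless_def sparse_less_def less_y_def psiexp_std_exp[OF assms(1)] psiexp_std_exp[OF assms(2)]
  by auto

lemma hless_if_less_y_std_exp:
  assumes "a \<in> Ey M" "y \<in> SMh M" "lt_y a (std_exp y)" "psiexp a \<noteq> y"
  shows "lt_h (psiexp a) y"
proof -
  have "ydeg a \<noteq> ydeg (std_exp y) \<or> fst (psiexp a) \<noteq> fst y"
    using assms(4) psiexp_std_exp[OF assms(2)] by (auto simp: prod_eq_iff snd_psiexp)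
  then show ?thesis
    using assms(3) lookup_zero_add_deltaA_le_ydeg[OF assms(1)] lookup_zero_std_exp[OF assms(2)]
      ydeg_std_exp[OF assms(2)] psiexp_std_exp[OF assms(2)]
    unfolding hless_def sparse_less_def less_y_def by (auto simp: snd_psiexp)
qed

lemma std_exp_summand:
  assumes x: "x \<in> SMh M" and eq: "std_exp x = c + e"
  shows "std_exp (psiexp c) = c"
proof -
  have ce: "c \<in> Ey M" "e \<in> Ey M"
    using std_exp_in_Ey[OF x] eq by (simp_all add: Ey_add_iff)
  show ?thesis
  proof (rule std_exp_eqI[OF ce(1)])
    fix b assume b: "b \<in> Ey M" "psiexp b = psiexp c" "b \<noteq> c"
    show "lt_y c b"
    proof (rule ccontr)
      \<comment> \<open>Otherwise b + e would be a smaller preimage of x than std_exp x.\<close>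
      assume "\<not> lt_y c b"
      then have "lt_y b c" using less_y.total b ce by blast
      then have less: "lt_y (b + e) (std_exp x)" using less_y_add_right b(1) ce eq by simp
      have "b + e \<in> Ey M" "psiexp (b + e) = x"
        using b ce psiexp_std_exp[OF x] eq by (simp_all add: Ey_add_iff psiexp_add)
      then have "b + e = std_exp x \<or> lt_y (std_exp x) (b + e)"
        using std_exp_least[OF x] by blast
      then show False
        using less less_y.irrefl less_y.asym \<open>b + e \<in> Ey M\<close> std_exp_in_Ey[OF x] by metis
    qed
  qed
qed

section \<open>The normal form map\<close>

definition std_lift :: "((int^'n) \<times> int \<Rightarrow>\<^sub>0 'k::comm_monoid_add) \<Rightarrow> ((int^'n \<Rightarrow>\<^sub>0 nat) \<Rightarrow>\<^sub>0 'k)" where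
  "std_lift f = (\<Sum>x\<in>Poly_Mapping.keys f. Poly_Mapping.single (std_exp x) (Poly_Mapping.lookup f x))"

lemma lookup_std_lift:
  assumes "Poly_Mapping.keys f \<subseteq> SMh M" "x \<in> SMh M"
  shows "Poly_Mapping.lookup (std_lift f) (std_exp x) = Poly_Mapping.lookup f x"
proof -
  have "Poly_Mapping.lookup (std_lift f) (std_exp x)
      = (\<Sum>y\<in>Poly_Mapping.keys f. if y = x then Poly_Mapping.lookup f y else 0)"
    unfolding std_lift_def lookup_sum
  proof (rule sum.cong)
    fix y assume "y \<in> Poly_Mapping.keys f"
    then have "std_exp y = std_exp x \<longleftrightarrow> y = x"
      using assms inj_onD[OF std_exp_inj] by blast
    then show "Poly_Mapping.lookup (Poly_Mapping.single (std_exp y) (Poly_Mapping.lookup f y)) (std_exp x)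
        = (if y = x then Poly_Mapping.lookup f y else 0)"
      by (simp add: lookup_single when_def)
  qed simp
  then show ?thesis by (simp add: in_keys_iff)
qed

lemma keys_std_lift:
  assumes "Poly_Mapping.keys f \<subseteq> SMh M"
  shows "Poly_Mapping.keys (std_lift f) = std_exp ` Poly_Mapping.keys f"
proof
  show "Poly_Mapping.keys (std_lift f) \<subseteq> std_exp ` Poly_Mapping.keys f"
    unfolding std_lift_def
    using keys_sum[of "\<lambda>x. Poly_Mapping.single (std_exp x) (Poly_Mapping.lookup f x)" "Poly_Mapping.keys f"]
    by (auto split: if_splits)
  show "std_exp ` Poly_Mapping.keys f \<subseteq> Poly_Mapping.keys (std_lift f)"
    using assms lookup_std_lift[OF assms] by (auto simp: in_keys_iff)
qed

lemma std_lift_in_Ky: "Poly_Mapping.keys f \<subseteq> SMh M \<Longrightarrow> std_lift f \<in> Ky M"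
  using std_exp_in_Ey by (auto simp: Ky_def keys_std_lift)

lemma psi_std_lift:
  assumes "Poly_Mapping.keys f \<subseteq> SMh M"
  shows "psi (std_lift f) = f"
proof -
  have "psi (std_lift f) = (\<Sum>x\<in>Poly_Mapping.keys f. Poly_Mapping.single x (Poly_Mapping.lookup f x))"
    unfolding std_lift_def psi_sum psi_single
    by (rule sum.cong) (use assms psiexp_std_exp in auto)
  then show ?thesis by (simp add: sum_single_lookup)
qed

lemma lookup_psi_lm:
  assumes "g \<in> Ky M" "g \<noteq> 0" and std: "std_exp (psiexp (lm lt_y g)) = lm lt_y g"
  shows "Poly_Mapping.lookup (psi g) (psiexp (lm lt_y g)) = Poly_Mapping.lookup g (lm lt_y g)"
proof -
  let ?m = "lm lt_y g"
  have K: "Poly_Mapping.keys g \<subseteq> Ey M" using assms(1) by (simp add: Ky_def)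
  note lm = less_y.lm_greatest[OF K assms(2)]
  have "psiexp a = psiexp ?m \<longleftrightarrow> a = ?m" if "a \<in> Poly_Mapping.keys g" for a
  proof
    assume "psiexp a = psiexp ?m"
    then have "a \<noteq> ?m \<Longrightarrow> lt_y ?m a"
      using std_exp_least[OF psiexp_in_SMh, of ?m a] std K that lm(1) by auto
    then show "a = ?m"
      using lm(2) that less_y.asym K lm(1) by blast
  qed simp
  then have "Poly_Mapping.lookup (psi g) (psiexp ?m)
      = (\<Sum>a\<in>Poly_Mapping.keys g. if a = ?m then Poly_Mapping.lookup g a else 0)"
    unfolding lookup_psi by (intro sum.cong) auto
  then show ?thesis using lm(1) by simp
qed

lemma lm_Tideal_ne_std_exp:
  assumes "q \<in> Tideal M" "q \<noteq> 0" "x \<in> SMh M"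
  shows "lm lt_y q \<noteq> std_exp x"
proof
  assume eq: "lm lt_y q = std_exp x"
  have q: "q \<in> Ky M" "psi q = 0" using assms(1) by (simp_all add: Tideal_def)
  have "Poly_Mapping.lookup q (lm lt_y q) = 0"
    using lookup_psi_lm[OF q(1) assms(2)] q(2) eq psiexp_std_exp[OF assms(3)] by simp
  with lm_less_y_in_keys[OF q(1) assms(2)] show False by (simp add: in_keys_iff)
qed

definition T_reduced :: "((int^'n \<Rightarrow>\<^sub>0 nat) \<Rightarrow>\<^sub>0 'k::comm_monoid_add) \<Rightarrow> bool" where
  "T_reduced r \<longleftrightarrow>
     (\<forall>\<alpha>\<in>Poly_Mapping.keys r. \<not> (\<exists>q\<in>Tideal M. q \<noteq> (0 :: _ \<Rightarrow>\<^sub>0 'k) \<and> lm lt_y q = \<alpha>))"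

lemma T_reduced_std_lift: "Poly_Mapping.keys f \<subseteq> SMh M \<Longrightarrow> T_reduced (std_lift f)"
  using lm_Tideal_ne_std_exp by (auto simp: T_reduced_def keys_std_lift)

lemma T_reduced_unique:
  fixes r r' :: "(int^'n \<Rightarrow>\<^sub>0 nat) \<Rightarrow>\<^sub>0 'k::ab_group_add"
  assumes "r - r' \<in> Tideal M" "T_reduced r" "T_reduced r'"
  shows "r = r'"
proof (rule ccontr)
  assume "r \<noteq> r'"
  then have "lm lt_y (r - r') \<in> Poly_Mapping.keys (r - r')"
    using assms(1) by (intro lm_less_y_in_keys) (simp_all add: Tideal_def)
  then have "lm lt_y (r - r') \<in> Poly_Mapping.keys r \<union> Poly_Mapping.keys r'"
    using keys_diff[of r r'] by blast
  moreover have "r - r' \<noteq> 0" using \<open>r \<noteq> r'\<close> by simp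
  ultimately show False
    using assms unfolding T_reduced_def by blast
qed

lemma eta_eq_std_lift:
  fixes g :: "(int^'n \<Rightarrow>\<^sub>0 nat) \<Rightarrow>\<^sub>0 'k::ab_group_add"
  assumes g: "g \<in> Ky M"
  shows "eta M lt_y g = std_lift (psi g)"
proof -
  have K: "Poly_Mapping.keys (psi g) \<subseteq> SMh M" using psi_Ky_subset_KS[OF g] by (simp add: KS_def)
  have std_Ky: "std_lift (psi g) \<in> Ky M" by (rule std_lift_in_Ky[OF K])
  have "g - std_lift (psi g) \<in> Tideal M"
    using Ky_diff[OF g std_Ky] by (simp add: Tideal_def psi_diff psi_std_lift[OF K])
  show ?thesis
    unfolding eta_def T_reduced_def[symmetric]
  proof (rule the_equality)
    show "std_lift (psi g) \<in> Ky M \<and> g - std_lift (psi g) \<in> Tideal M \<and> T_reduced (std_lift (psi g))"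
      using std_Ky \<open>g - std_lift (psi g) \<in> Tideal M\<close> T_reduced_std_lift[OF K] by blast
    fix r assume r: "r \<in> Ky M \<and> g - r \<in> Tideal M \<and> T_reduced r"
    have "r - std_lift (psi g) = (g - std_lift (psi g)) - (g - r)" by simp
    also have "\<dots> \<in> Tideal M"
      using \<open>g - std_lift (psi g) \<in> Tideal M\<close> by (rule Tideal_diff) (use r in blast)
    finally show "r = std_lift (psi g)"
      using r T_reduced_std_lift[OF K] by (intro T_reduced_unique) simp_all
  qed
qed

lemma phi_eq_std_lift:
  fixes f :: "(int^'n) \<times> int \<Rightarrow>\<^sub>0 'k::ab_group_add"
  assumes "f \<in> KS (SMh M)"
  shows "phi M lt_y f = std_lift f"
proof -
  have K: "Poly_Mapping.keys f \<subseteq> SMh M" using assms by (simp add: KS_def)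
  have "\<exists>g. g \<in> Ky M \<and> psi g = f"
    using std_lift_in_Ky[OF K] psi_std_lift[OF K] by blast
  from someI_ex[OF this] show ?thesis
    unfolding phi_def by (simp add: eta_eq_std_lift)
qed

lemma lm_std_lift:
  assumes K: "Poly_Mapping.keys f \<subseteq> SMh M" and "f \<noteq> 0"
  shows "lm lt_y (std_lift f) = std_exp (lm lt_h f)"
proof (rule less_y.lm_eqI)
  note lm = hless.lm_greatest[OF assms]
  show "Poly_Mapping.keys (std_lift f) \<subseteq> Ey M"
    using std_lift_in_Ky[OF K] by (simp add: Ky_def)
  show "std_exp (lm lt_h f) \<in> Poly_Mapping.keys (std_lift f)"
    using lm(1) by (simp add: keys_std_lift[OF K])
  show "\<forall>b\<in>Poly_Mapping.keys (std_lift f). b \<noteq> std_exp (lm lt_h f) \<longrightarrow> lt_y b (std_exp (lm lt_h f))"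
  proof (clarsimp simp: keys_std_lift[OF K])
    fix x assume "x \<in> Poly_Mapping.keys f" "std_exp x \<noteq> std_exp (lm lt_h f)"
    then show "lt_y (std_exp x) (std_exp (lm lt_h f))"
      using lm K by (intro std_exp_mono) auto
  qed
qed

lemma lm_psi:
  assumes "g \<in> Ky M" "g \<noteq> 0" and std: "std_exp (psiexp (lm lt_y g)) = lm lt_y g"
  shows "psi g \<noteq> 0" "lm lt_h (psi g) = psiexp (lm lt_y g)"
proof -
  let ?m = "lm lt_y g"
  have K: "Poly_Mapping.keys g \<subseteq> Ey M" using assms(1) by (simp add: Ky_def)
  note lm = less_y.lm_greatest[OF K assms(2)]
  have key: "psiexp ?m \<in> Poly_Mapping.keys (psi g)"
    using lookup_psi_lm[OF assms] lm(1) by (simp add: in_keys_iff)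
  then show "psi g \<noteq> 0" by auto
  show "lm lt_h (psi g) = psiexp ?m"
  proof (rule hless.lm_eqI[OF _ key])
    show "Poly_Mapping.keys (psi g) \<subseteq> SMh M"
      using psi_Ky_subset_KS[OF assms(1)] by (simp add: KS_def)
    show "\<forall>y\<in>Poly_Mapping.keys (psi g). y \<noteq> psiexp ?m \<longrightarrow> lt_h y (psiexp ?m)"
    proof (intro ballI impI)
      fix y assume "y \<in> Poly_Mapping.keys (psi g)" "y \<noteq> psiexp ?m"
      then obtain a where "a \<in> Poly_Mapping.keys g" "y = psiexp a" "a \<noteq> ?m"
        using keys_psi by blast
      then show "lt_h y (psiexp ?m)"
        using hless_if_less_y_std_exp[of a "psiexp ?m"] lm(2) K std psiexp_in_SMh \<open>y \<noteq> psiexp ?m\<close> lm(1)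
        by auto
    qed
  qed
qed

section \<open>Division and sparse divisibility\<close>

lemma keys_reduction_less_lm:
  fixes f g :: "(int^'n \<Rightarrow>\<^sub>0 nat) \<Rightarrow>\<^sub>0 'k::field"
  assumes f: "f \<in> Ky M" "f \<noteq> 0" and g: "g \<in> Ky M" "g \<noteq> 0" and dvd: "lm lt_y f = lm lt_y g + d"
  defines "h \<equiv> Poly_Mapping.single d (Poly_Mapping.lookup f (lm lt_y f) / Poly_Mapping.lookup g (lm lt_y g)) * g"
  shows "\<forall>k\<in>Poly_Mapping.keys (f - h). lt_y k (lm lt_y f)"
proof
  fix k assume k: "k \<in> Poly_Mapping.keys (f - h)"
  have Kf: "Poly_Mapping.keys f \<subseteq> Ey M" and Kg: "Poly_Mapping.keys g \<subseteq> Ey M"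
    using f(1) g(1) by (simp_all add: Ky_def)
  note lf = less_y.lm_greatest[OF Kf f(2)] and lg = less_y.lm_greatest[OF Kg g(2)]
  have Ey: "lm lt_y g \<in> Ey M" "d \<in> Ey M"
    using lf(1) Kf dvd by (auto simp: Ey_add_iff)
  have "Poly_Mapping.lookup h (lm lt_y f) = Poly_Mapping.lookup f (lm lt_y f)"
    using lg(1) unfolding h_def dvd by (subst add.commute) (simp add: lookup_single_mult in_keys_iff)
  then have "k \<noteq> lm lt_y f"
    using k by (auto simp: in_keys_iff lookup_minus)
  moreover have "k \<in> Poly_Mapping.keys f \<or> k \<in> Poly_Mapping.keys h"
    using keys_diff[of f h] k by blast
  ultimately show "lt_y k (lm lt_y f)"
  proof (elim disjE)
    assume "k \<in> Poly_Mapping.keys h"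
    then obtain b where b: "b \<in> Poly_Mapping.keys g" "k = d + b"
      using keys_single_mult unfolding h_def by blast
    with \<open>k \<noteq> lm lt_y f\<close> dvd have "lt_y b (lm lt_y g)"
      using lg(2) by (auto simp: add.commute)
    then show ?thesis
      using less_y_add_right[of b "lm lt_y g" d] b Kg Ey dvd by (auto simp: add.commute)
  qed (use lf(2) in blast)
qed

lemma groebner_division_step:
  fixes J G :: "((int^'n \<Rightarrow>\<^sub>0 nat) \<Rightarrow>\<^sub>0 'k::field) set"
  assumes J_Ky: "J \<subseteq> Ky M"
    and J_diff: "\<And>a b. a \<in> J \<Longrightarrow> b \<in> J \<Longrightarrow> a - b \<in> J"
    and J_mult: "\<And>r a. r \<in> Ky M \<Longrightarrow> a \<in> J \<Longrightarrow> r * a \<in> J"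
    and gb: "groebner_basis lt_y J G" and f: "f \<in> J" "f \<noteq> 0"
  obtains q g where "q \<in> Ky M" "g \<in> G" "f - q * g \<in> J"
    "f - q * g = 0 \<or> lt_y (lm lt_y (f - q * g)) (lm lt_y f)"
proof -
  have fK: "f \<in> Ky M" using f J_Ky by blast
  obtain g d where g: "g \<in> G" "g \<noteq> 0" and dvd: "lm lt_y f = lm lt_y g + d"
    using gb f unfolding groebner_basis_def ydvd_def by blast
  have gJ: "g \<in> J" and gK: "g \<in> Ky M" using g(1) gb J_Ky by (auto simp: groebner_basis_def)
  define q where "q = Poly_Mapping.single d (Poly_Mapping.lookup f (lm lt_y f) / Poly_Mapping.lookup g (lm lt_y g))"
  have "q \<in> Ky M"
    using lm_less_y_in_Ey[OF fK f(2)] dvd by (simp add: q_def Ky_def Ey_add_iff)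
  moreover have "f - q * g \<in> J"
    using J_diff[OF f(1) J_mult[OF \<open>q \<in> Ky M\<close> gJ]] .
  moreover have "lt_y (lm lt_y (f - q * g)) (lm lt_y f)" if "f - q * g \<noteq> 0"
    using keys_reduction_less_lm[OF fK f(2) gK g(2) dvd] lm_less_y_in_keys[OF _ that]
      \<open>f - q * g \<in> J\<close> J_Ky by (auto simp: q_def)
  ultimately show ?thesis using that g(1) by blast
qed

lemma groebner_basis_generates:
  fixes J G :: "((int^'n \<Rightarrow>\<^sub>0 nat) \<Rightarrow>\<^sub>0 'k::field) set"
  assumes J_Ky: "J \<subseteq> Ky M"
    and J_diff: "\<And>a b. a \<in> J \<Longrightarrow> b \<in> J \<Longrightarrow> a - b \<in> J"
    and J_mult: "\<And>r a. r \<in> Ky M \<Longrightarrow> a \<in> J \<Longrightarrow> r * a \<in> J"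
    and gb: "groebner_basis lt_y J G"
  shows "J \<subseteq> ideal_gen (Ky M) G"
proof
  fix f assume "f \<in> J"
  from wf_inv_image[OF wf_less_y, of "lm lt_y"] show "f \<in> ideal_gen (Ky M) G"
    using \<open>f \<in> J\<close>
  proof (induction f rule: wf_induct_rule)
    case (less f)
    show ?case
    proof (cases "f = 0")
      case False
      then obtain q g where qg: "q \<in> Ky M" "g \<in> G" "f - q * g \<in> J"
        and smaller: "f - q * g = 0 \<or> lt_y (lm lt_y (f - q * g)) (lm lt_y f)"
        using groebner_division_step[OF assms less.prems] by blast
      have "f - q * g \<in> ideal_gen (Ky M) G"
      proof (cases "f - q * g = 0")
        case False
        with smaller have "(f - q * g, f) \<in> inv_image {(b, a). a \<in> Ey M \<and> b \<in> Ey M \<and> lt_y b a} (lm lt_y)"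
          using lm_less_y_in_Ey qg(3) less.prems \<open>f \<noteq> 0\<close> J_Ky by auto
        then show ?thesis using less.IH qg(3) by blast
      qed (simp add: ideal_gen_zero)
      then have "q * g + (f - q * g) \<in> ideal_gen (Ky M) G"
        by (rule ideal_gen_step[OF qg(1,2)])
      then show ?thesis by simp
    qed (simp add: ideal_gen_zero)
  qed
qed

text \<open>Compare total degrees and y_0-exponents of the standard exponents std_exp x, c and e.\<close>

lemma delta_dvd_std_exp_summand:
  assumes x: "x \<in> SMh M" and eq: "std_exp x = c + e"
  shows "delta_dvd M (psiexp c) x"
proof -
  have ce: "c \<in> Ey M" "e \<in> Ey M"
    using std_exp_in_Ey[OF x] eq by (simp_all add: Ey_add_iff)
  have std: "std_exp (psiexp c) = c" "std_exp (psiexp e) = e"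
    using std_exp_summand[OF x eq] std_exp_summand[OF x, of e c] eq by (simp_all add: add.commute)
  have sum: "psiexp c + psiexp e = x"
    using psiexp_std_exp[OF x] eq by (simp add: psiexp_add)
  have "deltaA M (fst (psiexp c)) + deltaA M (fst (psiexp e)) = deltaA M (fst x)"
    using lookup_zero_std_exp_psiexp[OF ce(1) std(1)] lookup_zero_std_exp_psiexp[OF ce(2) std(2)]
      lookup_zero_std_exp_psiexp[OF std_exp_in_Ey[OF x]] psiexp_std_exp[OF x] eq
    by (simp add: std_exp_in_Ey[OF x] ydeg_add lookup_add)
  with sum psiexp_in_SMh[OF ce(2)] show ?thesis
    unfolding delta_dvd_def by blast
qed

lemma delta_dvd_lm_psi:
  assumes f: "f \<in> KS (SMh M)" "f \<noteq> 0" and g: "g \<in> Ky M" "g \<noteq> 0"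
    and dvd: "ydvd (lm lt_y g) (lm lt_y (std_lift f))"
  shows "psi g \<noteq> 0" "delta_dvd M (lm lt_h (psi g)) (lm lt_h f)"
proof -
  have K: "Poly_Mapping.keys f \<subseteq> SMh M" using f(1) by (simp add: KS_def)
  have x: "lm lt_h f \<in> SMh M" using hless.lm_greatest(1)[OF K f(2)] K by blast
  obtain e where eq: "std_exp (lm lt_h f) = lm lt_y g + e"
    using dvd lm_std_lift[OF K f(2)] by (auto simp: ydvd_def)
  have std: "std_exp (psiexp (lm lt_y g)) = lm lt_y g"
    by (rule std_exp_summand[OF x eq])
  show "psi g \<noteq> 0" "delta_dvd M (lm lt_h (psi g)) (lm lt_h f)"
    using lm_psi[OF g std] delta_dvd_std_exp_summand[OF x eq] by simp_all
qed

end

locale sparse_groebner_setting = sparse_setting M lessM tilde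
  for M :: "(real^'n) set" and lessM tilde +
  fixes B I :: "((int^'n) \<times> int \<Rightarrow>\<^sub>0 'k::field) set" and J G :: "((int^'n \<Rightarrow>\<^sub>0 nat) \<Rightarrow>\<^sub>0 'k) set"
  assumes B_KS: "B \<subseteq> KS (SMh M)" and I_eq: "I = ideal_gen (KS (SMh M)) B"
    and J_eq: "J = ideal_gen (Ky M) (phi M (less_y lessM tilde) ` I \<union> Tideal M)"
    and groebner: "groebner_basis (less_y lessM tilde) J G"
begin

lemma I_subset_KS: "I \<subseteq> KS (SMh M)"
  unfolding I_eq using B_KS by (intro ideal_gen_subset_ring zero_in_KS KS_add KS_SMh_mult)

lemma psi_std_lift_I: "f \<in> I \<Longrightarrow> psi (std_lift f) = f"
  using I_subset_KS by (intro psi_std_lift) (auto simp: KS_def)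

lemma J_eq_std_lift: "J = ideal_gen (Ky M) (std_lift ` I \<union> Tideal M)"
proof -
  have "phi M lt_y ` I = std_lift ` I"
    using phi_eq_std_lift I_subset_KS by (auto simp: subset_iff)
  then show ?thesis by (simp add: J_eq)
qed

lemma J_subset_Ky: "J \<subseteq> Ky M"
proof -
  have "std_lift ` I \<subseteq> Ky M"
  proof (rule image_subsetI)
    fix f assume "f \<in> I"
    with I_subset_KS show "std_lift f \<in> Ky M" by (intro std_lift_in_Ky) (auto simp: KS_def)
  qed
  then show ?thesis
    unfolding J_eq_std_lift by (intro ideal_gen_subset_ring zero_in_Ky Ky_add Ky_mult) (auto simp: Tideal_def)
qed

lemma std_lift_in_J: "f \<in> I \<Longrightarrow> std_lift f \<in> J"
  unfolding J_eq_std_lift by (intro generator_in_ideal_gen one_in_Ky) blast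

lemma psi_J_subset_I: "psi ` J \<subseteq> I"
proof -
  have "0 \<in> I" unfolding I_eq by (rule ideal_gen_zero)
  then have "psi ` (std_lift ` I \<union> Tideal M) \<subseteq> I"
    using psi_std_lift_I by (auto simp: Tideal_def)
  then have "ideal_gen (KS (SMh M)) (psi ` (std_lift ` I \<union> Tideal M)) \<subseteq> I"
    unfolding I_eq by (rule ideal_gen_mono) (rule KS_SMh_mult)
  then show ?thesis
    unfolding J_eq_std_lift using psi_ideal_gen by blast
qed

lemma G_subset_J: "G \<subseteq> J"
  using groebner by (simp add: groebner_basis_def)

lemma J_subset_ideal_gen_G: "J \<subseteq> ideal_gen (Ky M) G"
proof (rule groebner_basis_generates[OF J_subset_Ky _ _ groebner])
  show "\<And>a b. a \<in> J \<Longrightarrow> b \<in> J \<Longrightarrow> a - b \<in> J"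
    unfolding J_eq by (rule ideal_gen_diff[OF Ky_uminus])
  show "\<And>r a. r \<in> Ky M \<Longrightarrow> a \<in> J \<Longrightarrow> r * a \<in> J"
    unfolding J_eq by (rule ideal_gen_mult[OF Ky_mult])
qed

lemma ideal_gen_psi_G: "ideal_gen (KS (SMh M)) (psi ` G) = I"
proof
  have "psi ` G \<subseteq> ideal_gen (KS (SMh M)) B"
    using G_subset_J psi_J_subset_I I_eq by blast
  then show "ideal_gen (KS (SMh M)) (psi ` G) \<subseteq> I"
    unfolding I_eq by (rule ideal_gen_mono) (rule KS_SMh_mult)
  show "I \<subseteq> ideal_gen (KS (SMh M)) (psi ` G)"
  proof
    fix f assume "f \<in> I"
    then have "std_lift f \<in> ideal_gen (Ky M) G"
      using std_lift_in_J J_subset_ideal_gen_G by blast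
    from psi_ideal_gen[OF this] show "f \<in> ideal_gen (KS (SMh M)) (psi ` G)"
      using psi_std_lift_I \<open>f \<in> I\<close> by simp
  qed
qed

lemma psi_G_delta_dvd:
  assumes f: "f \<in> I" "f \<noteq> 0"
  shows "\<exists>g\<in>psi ` G. g \<noteq> 0 \<and> delta_dvd M (lm lt_h g) (lm lt_h f)"
proof -
  have "std_lift f \<noteq> 0" using psi_std_lift_I f by force
  then obtain g where g: "g \<in> G" "g \<noteq> 0" "ydvd (lm lt_y g) (lm lt_y (std_lift f))"
    using groebner std_lift_in_J[OF f(1)] unfolding groebner_basis_def by blast
  have "f \<in> KS (SMh M)" "g \<in> Ky M"
    using f(1) g(1) I_subset_KS G_subset_J J_subset_Ky by blast+
  from delta_dvd_lm_psi[OF this(1) f(2) this(2) g(2,3)] g(1) show ?thesis by blast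
qed

theorem sparse_groebner_basis_psi_G: "sparse_groebner_basis M lessM I (psi ` G)"
  unfolding sparse_groebner_basis_def
proof (intro conjI ballI impI)
  show "psi ` G \<subseteq> I" using G_subset_J psi_J_subset_I by blast
  show "ideal_gen (KS (SMh M)) (psi ` G) = I" by (rule ideal_gen_psi_G)
  show "\<exists>g\<in>psi ` G. g \<noteq> 0 \<and> delta_dvd M (lm lt_h g) (lm lt_h f)" if "f \<in> I" "f \<noteq> 0" for f
    using that by (rule psi_G_delta_dvd)
qed

end

theorem mainTheorem2:
  fixes M :: "(real^'n) set"
    and lessM :: "int^'n \<Rightarrow> int^'n \<Rightarrow> bool"
    and tilde :: "(int^'n \<Rightarrow>\<^sub>0 nat) \<Rightarrow> (int^'n \<Rightarrow>\<^sub>0 nat) \<Rightarrow> bool"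
    and I :: "(((int^'n) \<times> int) \<Rightarrow>\<^sub>0 'k::field_char_0) set"
    and J G :: "((int^'n \<Rightarrow>\<^sub>0 nat) \<Rightarrow>\<^sub>0 'k) set"
  assumes "polytope M" and "0 \<in> M"
    and "pointed (SM M)" and "pointed (SMh M)"
    and "monomial_order (SM M) lessM"
    and "monomial_order (Ey M) tilde"
    and "homogeneous_ideal M I"
    and "J = ideal_gen (Ky M) (phi M (less_y lessM tilde) ` I \<union> Tideal M)"
    and "groebner_basis (less_y lessM tilde) J G"
  shows "sparse_groebner_basis M lessM I (psi ` G)"
proof -
  obtain B where "B \<subseteq> KS (SMh M)" "I = ideal_gen (KS (SMh M)) B"
    using assms(7) unfolding homogeneous_ideal_def by blast
  with assms have "sparse_groebner_setting M lessM tilde B I J G"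
    by (intro sparse_groebner_setting.intro sparse_setting.intro sparse_groebner_setting_axioms.intro
        finite_lattice_pts zero_in_lattice_pts)
  then show ?thesis
    by (rule sparse_groebner_setting.sparse_groebner_basis_psi_G)
qed

end
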